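(* Let $N\in\mathbb{N}_{\ge2}$ and $\phi,B_x,B_y>0$. For any data pairs $\{(x_i,y_i)\}_{i\in[N]}\subset[-B_x,B_x]\times[-B_y,B_y]$ with $|x_i-x_j|\ge\phi$ for all $i\ne j$, there exists a ReLU FNN function $f^{(mmr)}_{FF}:\mathbb{R}\to\mathbb{R}$ with width $N-1$, depth $2$ and weight bound $\max\{1,B_x,B_y,4B_y/\phi\}$ such that $f^{(mmr)}_{FF}(x_i)=y_i$ for all $i\in[N]$. Furthermore, $|f^{(mmr)}_{FF}(x)|\le\frac{8(N-1)B_xB_y}{\phi}+B_y$ for all $x\in[-B_x,B_x]$.
   Context: ReLU FNN of depth $L$, width $W$: $f_0=x$, $f_l=\sigma_R(W_lf_{l-1}+b_l)$ ($1\le l\le L-1$), $f=W_Lf_{L-1}+b_L$ with hidden layers of width $W$, $\sigma_R(x)=\max\{x,0\}$; the weight bound is the maximum absolute value of all weights and biases. *)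

theory Defs
  imports "HOL-Analysis.Analysis"
begin

definition relu :: "real \<Rightarrow> real" where
  "relu x = max x 0"

text \<open>A scalar-input, scalar-output ReLU feed-forward network of depth L and width W
  is given by weights Wt l i j (layer l, output neuron i, input neuron j) and biases bs l i.\<close>

definition layer_in :: "nat \<Rightarrow> nat \<Rightarrow> nat" where
  "layer_in W l = (if l \<le> 1 then 1 else W)"

definition layer_out :: "nat \<Rightarrow> nat \<Rightarrow> nat \<Rightarrow> nat" where
  "layer_out L W l = (if l < L then W else 1)"

fun hidden :: "(nat \<Rightarrow> nat \<Rightarrow> nat \<Rightarrow> real) \<Rightarrow> (nat \<Rightarrow> nat \<Rightarrow> real) \<Rightarrow> nat
                \<Rightarrow> real \<Rightarrow> nat \<Rightarrow> nat \<Rightarrow> real" where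
  "hidden Wt bs W x 0 = (\<lambda>i. if i = 0 then x else 0)"
| "hidden Wt bs W x (Suc l) =
     (\<lambda>i. relu ((\<Sum>j<layer_in W (Suc l). Wt (Suc l) i j * hidden Wt bs W x l j) + bs (Suc l) i))"

definition fnn_eval :: "nat \<Rightarrow> nat \<Rightarrow> (nat \<Rightarrow> nat \<Rightarrow> nat \<Rightarrow> real) \<Rightarrow> (nat \<Rightarrow> nat \<Rightarrow> real)
                        \<Rightarrow> real \<Rightarrow> real" where
  "fnn_eval L W Wt bs x =
     (\<Sum>j<layer_in W L. Wt L 0 j * hidden Wt bs W x (L - 1) j) + bs L 0"

definition weights_bounded_by ::
  "nat \<Rightarrow> nat \<Rightarrow> (nat \<Rightarrow> nat \<Rightarrow> nat \<Rightarrow> real) \<Rightarrow> (nat \<Rightarrow> nat \<Rightarrow> real) \<Rightarrow> real \<Rightarrow> bool" where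
  "weights_bounded_by L W Wt bs M \<longleftrightarrow>
     (\<forall>l\<in>{1..L}. \<forall>i<layer_out L W l.
        \<bar>bs l i\<bar> \<le> M \<and> (\<forall>j<layer_in W l. \<bar>Wt l i j\<bar> \<le> M))"

definition is_relu_fnn :: "nat \<Rightarrow> nat \<Rightarrow> real \<Rightarrow> (real \<Rightarrow> real) \<Rightarrow> bool" where
  "is_relu_fnn L W M f \<longleftrightarrow>
     (\<exists>Wt bs. weights_bounded_by L W Wt bs M \<and> (\<forall>x. f x = fnn_eval L W Wt bs x))"

end

theory Submission
  imports Defs
begin

text \<open>Order the data points by their abscissae. The piecewise linear interpolant
  through consecutive points has slopes bounded by \<open>2 By / \<phi>\<close>, so it can be written as
  \<open>c + \<Sum>k a\<^sub>k relu (t - p\<^sub>k)\<close> with knots \<open>p\<^sub>k\<close> at all data points but the largest and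
  slope jumps \<open>|a\<^sub>k| \<le> 4 By / \<phi>\<close>. Such a sum is exactly a ReLU network of depth 2, and on
  \<open>[-Bx, Bx]\<close> each of its \<open>N - 1\<close> terms is at most \<open>(4 By / \<phi>) (2 Bx)\<close> in absolute value.\<close>

definition relu_expansion :: "nat \<Rightarrow> real \<Rightarrow> (nat \<Rightarrow> real) \<Rightarrow> (nat \<Rightarrow> real) \<Rightarrow> real \<Rightarrow> real" where
  "relu_expansion n c a p t = c + (\<Sum>k<n. a k * relu (t - p k))"

lemma relu_expansion_add_knot:
  "relu_expansion (Suc n) c (a(n := \<alpha>)) (p(n := q)) t = relu_expansion n c a p t + \<alpha> * relu (t - q)"
  unfolding relu_expansion_def by (simp add: sum.lessThan_Suc)

lemma relu_expansion_right_of_knots: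
  assumes "\<And>k. k < n \<Longrightarrow> p k \<le> u" and "u \<le> t"
  shows "relu_expansion n c a p t = relu_expansion n c a p u + (\<Sum>k<n. a k) * (t - u)"
proof -
  have relu_shift: "relu (t - p k) = relu (u - p k) + (t - u)" if "k < n" for k
    using assms(1)[OF that] assms(2) by (simp add: relu_def)
  have "(\<Sum>k<n. a k * relu (t - p k)) = (\<Sum>k<n. a k * relu (u - p k) + a k * (t - u))"
    by (intro sum.cong refl) (simp add: relu_shift distrib_left)
  then show ?thesis
    unfolding relu_expansion_def by (simp add: sum.distrib sum_distrib_right)
qed

lemma abs_relu_expansion_le:
  assumes "\<bar>c\<bar> \<le> C" and "\<And>k. k < n \<Longrightarrow> \<bar>a k\<bar> \<le> A \<and> \<bar>p k\<bar> \<le> B" and "\<bar>t\<bar> \<le> B"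
  shows "\<bar>relu_expansion n c a p t\<bar> \<le> C + real n * (A * (2 * B))"
proof -
  have "\<bar>a k * relu (t - p k)\<bar> \<le> A * (2 * B)" if "k < n" for k
  proof -
    have "\<bar>relu (t - p k)\<bar> \<le> 2 * B" using assms(2)[OF that] assms(3) by (auto simp: relu_def)
    then show ?thesis unfolding abs_mult using assms(2)[OF that] by (intro mult_mono) auto
  qed
  then have "(\<Sum>k<n. \<bar>a k * relu (t - p k)\<bar>) \<le> (\<Sum>k<n. A * (2 * B))"
    by (intro sum_mono) simp
  moreover have "\<bar>relu_expansion n c a p t\<bar> \<le> \<bar>c\<bar> + (\<Sum>k<n. \<bar>a k * relu (t - p k)\<bar>)"
    unfolding relu_expansion_def by (rule order_trans[OF abs_triangle_ineq add_left_mono[OF sum_abs]])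
  ultimately show ?thesis using assms(1) by simp
qed

lemma is_relu_fnn_relu_expansion:
  assumes "1 \<le> M" and "\<bar>c\<bar> \<le> M" and "\<And>k. k < n \<Longrightarrow> \<bar>a k\<bar> \<le> M \<and> \<bar>p k\<bar> \<le> M"
  shows "is_relu_fnn 2 n M (relu_expansion n c a p)"
proof -
  define Wt where "Wt = (\<lambda>l (i::nat) (j::nat). if l = (1::nat) then 1 else a j)"
  define bs where "bs = (\<lambda>l (i::nat). if l = (1::nat) then - p i else c)"
  have "fnn_eval 2 n Wt bs t = relu_expansion n c a p t" for t
    unfolding fnn_eval_def relu_expansion_def Wt_def bs_def
    by (simp add: layer_in_def numeral_2_eq_2 add.commute)
  moreover have "weights_bounded_by 2 n Wt bs M"
    unfolding weights_bounded_by_def layer_out_def layer_in_def Wt_def bs_def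
    using assms by (auto simp: numeral_2_eq_2 le_Suc_eq)
  ultimately show ?thesis unfolding is_relu_fnn_def by metis
qed

lemma relu_expansion_append_segment:
  fixes n :: nat and a p :: "nat \<Rightarrow> real" and c xl xr yl yr :: real
  defines "a' \<equiv> a(n := (yr - yl) / (xr - xl) - (\<Sum>k<n. a k))"
  assumes knots: "\<And>k. k < n \<Longrightarrow> p k \<le> xl" and "xl < xr"
    and at_xl: "relu_expansion n c a p xl = yl"
  shows "relu_expansion (Suc n) c a' (p(n := xl)) xr = yr"
    and "\<And>t. t \<le> xl \<Longrightarrow> relu_expansion (Suc n) c a' (p(n := xl)) t = relu_expansion n c a p t"
    and "(\<Sum>k<Suc n. a' k) = (yr - yl) / (xr - xl)"
proof -
  define s where "s = (\<Sum>k<n. a k)"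
  have "relu_expansion n c a p xr = yl + s * (xr - xl)"
    unfolding s_def at_xl[symmetric] using \<open>xl < xr\<close>
    by (intro relu_expansion_right_of_knots knots) auto
  then have "relu_expansion (Suc n) c a' (p(n := xl)) xr
      = yl + s * (xr - xl) + ((yr - yl) / (xr - xl) - s) * (xr - xl)"
    unfolding a'_def s_def relu_expansion_add_knot using \<open>xl < xr\<close> by (simp add: relu_def)
  also have "\<dots> = yl + (yr - yl) / (xr - xl) * (xr - xl)" by (simp add: left_diff_distrib)
  also have "\<dots> = yr" using \<open>xl < xr\<close> by simp
  finally show "relu_expansion (Suc n) c a' (p(n := xl)) xr = yr" .
  show "relu_expansion (Suc n) c a' (p(n := xl)) t = relu_expansion n c a p t" if "t \<le> xl" for t
    unfolding a'_def relu_expansion_add_knot using that by (simp add: relu_def)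
  show "(\<Sum>k<Suc n. a' k) = (yr - yl) / (xr - xl)"
    unfolding a'_def by (simp add: sum.lessThan_Suc)
qed

lemma abs_difference_quotient_le:
  fixes y0 y1 d \<phi> B :: real
  assumes "\<bar>y0\<bar> \<le> B" and "\<bar>y1\<bar> \<le> B" and "0 < \<phi>" and "\<phi> \<le> d"
  shows "\<bar>(y1 - y0) / d\<bar> \<le> 2 * B / \<phi>"
proof -
  have "\<bar>(y1 - y0) / d\<bar> = \<bar>y1 - y0\<bar> / d"
    using assms(3,4) by (simp add: abs_divide)
  also have "\<dots> \<le> 2 * B / d"
    using assms by (intro divide_right_mono) auto
  also have "\<dots> \<le> 2 * B / \<phi>"
    using assms by (intro divide_left_mono) auto
  finally show ?thesis .
qed

lemma obtain_arg_max_finite: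
  fixes f :: "'a \<Rightarrow> 'b::linorder"
  assumes "finite I" and "I \<noteq> {}"
  obtains i where "i \<in> I" and "\<And>k. k \<in> I \<Longrightarrow> f k \<le> f i"
proof -
  have "Max (f ` I) \<in> f ` I" using assms by simp
  then obtain i where "i \<in> I" and "f i = Max (f ` I)" by auto
  with assms that show ?thesis by simp
qed

text \<open>Points are added from the right. Bounding the final slope \<open>\<Sum>k a\<^sub>k\<close> by \<open>2 B / \<phi>\<close>
  is the invariant that keeps each new coefficient, a difference of two slopes, below \<open>4 B / \<phi>\<close>.\<close>

lemma relu_expansion_interpolates:
  fixes x y :: "nat \<Rightarrow> real"
  assumes "finite I" and "card I = Suc n" and "\<phi> > 0"
    and "\<And>i. i \<in> I \<Longrightarrow> \<bar>y i\<bar> \<le> B"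
    and "\<And>i j. i \<in> I \<Longrightarrow> j \<in> I \<Longrightarrow> i \<noteq> j \<Longrightarrow> \<bar>x i - x j\<bar> \<ge> \<phi>"
  shows "\<exists>c a p. \<bar>c\<bar> \<le> B \<and> (\<forall>k<n. \<bar>a k\<bar> \<le> 4 * B / \<phi> \<and> p k \<in> x ` I)
           \<and> (\<forall>i\<in>I. relu_expansion n c a p (x i) = y i) \<and> \<bar>\<Sum>k<n. a k\<bar> \<le> 2 * B / \<phi>"
  using assms(1,2,4,5)
proof (induction n arbitrary: I)
  case 0
  then obtain i where "I = {i}" by (auto simp: card_Suc_eq)
  with 0 assms(3) show ?case
    by (intro exI[of _ "y i"] exI[of _ "\<lambda>_. 0"]) (auto simp: relu_expansion_def)
next
  case (Suc n)
  have "I \<noteq> {}" using Suc.prems(2) by auto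
  then obtain i where i: "i \<in> I" and right_of_i: "\<And>k. k \<in> I \<Longrightarrow> x k \<le> x i"
    using obtain_arg_max_finite[OF Suc.prems(1), of x] by blast
  define J where "J = I - {i}"
  have J: "finite J" "card J = Suc n"
    using Suc.prems(1,2) i unfolding J_def by auto
  have "\<And>k. k \<in> J \<Longrightarrow> \<bar>y k\<bar> \<le> B"
    and "\<And>k l. k \<in> J \<Longrightarrow> l \<in> J \<Longrightarrow> k \<noteq> l \<Longrightarrow> \<bar>x k - x l\<bar> \<ge> \<phi>"
    using Suc.prems(3,4) unfolding J_def by auto
  then obtain c a p where c: "\<bar>c\<bar> \<le> B"
    and ap: "\<forall>k<n. \<bar>a k\<bar> \<le> 4 * B / \<phi> \<and> p k \<in> x ` J"
    and interp: "\<forall>i\<in>J. relu_expansion n c a p (x i) = y i"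
    and slope: "\<bar>\<Sum>k<n. a k\<bar> \<le> 2 * B / \<phi>"
    using Suc.IH[OF J] by blast
  have "J \<noteq> {}" using J(2) by auto
  then obtain j where j: "j \<in> J" and left_of_j: "\<And>k. k \<in> J \<Longrightarrow> x k \<le> x j"
    using obtain_arg_max_finite[OF J(1), of x] by blast
  have "j \<in> I" "j \<noteq> i" using j unfolding J_def by auto
  then have gap: "x i - x j \<ge> \<phi>"
    using Suc.prems(4)[OF i \<open>j \<in> I\<close>] right_of_i[OF \<open>j \<in> I\<close>] by auto
  define \<sigma> where "\<sigma> = (y i - y j) / (x i - x j)"
  define a' where "a' = a(n := \<sigma> - (\<Sum>k<n. a k))"
  define p' where "p' = p(n := x j)"
  have knots_left: "p k \<le> x j" if "k < n" for k
    using ap left_of_j that by auto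
  have "x j < x i" using gap assms(3) by linarith
  have at_xj: "relu_expansion n c a p (x j) = y j" using interp j by blast
  note segment = relu_expansion_append_segment[where yr = "y i",
      OF knots_left \<open>x j < x i\<close> at_xj, folded \<sigma>_def, folded a'_def p'_def]
  have \<sigma>_le: "\<bar>\<sigma>\<bar> \<le> 2 * B / \<phi>"
    unfolding \<sigma>_def using Suc.prems(3) i \<open>j \<in> I\<close> assms(3) gap
    by (intro abs_difference_quotient_le) auto
  have "\<bar>\<sigma> - (\<Sum>k<n. a k)\<bar> \<le> \<bar>\<sigma>\<bar> + \<bar>\<Sum>k<n. a k\<bar>" by (rule abs_triangle_ineq4)
  also have "\<dots> \<le> 2 * B / \<phi> + 2 * B / \<phi>" using \<sigma>_le slope by (rule add_mono)
  also have "\<dots> = 4 * B / \<phi>" by (simp flip: add_divide_distrib)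
  finally have new_coeff: "\<bar>\<sigma> - (\<Sum>k<n. a k)\<bar> \<le> 4 * B / \<phi>" .
  have "relu_expansion (Suc n) c a' p' (x k) = y k" if "k \<in> I" for k
  proof (cases "k = i")
    case True
    then show ?thesis using segment(1) by simp
  next
    case False
    then have "k \<in> J" using that unfolding J_def by auto
    then show ?thesis using segment(2) interp left_of_j by simp
  qed
  moreover have "\<forall>k<Suc n. \<bar>a' k\<bar> \<le> 4 * B / \<phi> \<and> p' k \<in> x ` I"
    using ap new_coeff \<open>j \<in> I\<close> unfolding a'_def p'_def J_def by (auto simp: less_Suc_eq)
  moreover have "\<bar>\<Sum>k<Suc n. a' k\<bar> \<le> 2 * B / \<phi>"
    using segment(3) \<sigma>_le by simp
  ultimately show ?case using c by blast
qed

theorem lemma15: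
  fixes N :: nat and \<phi> Bx By :: real and x y :: "nat \<Rightarrow> real"
  assumes "N \<ge> 2" and "\<phi> > 0" and "Bx > 0" and "By > 0"
    and "\<And>i. i < N \<Longrightarrow> x i \<in> {-Bx..Bx} \<and> y i \<in> {-By..By}"
    and "\<And>i j. i < N \<Longrightarrow> j < N \<Longrightarrow> i \<noteq> j \<Longrightarrow> \<bar>x i - x j\<bar> \<ge> \<phi>"
  shows "\<exists>f. is_relu_fnn 2 (N - 1) (Max {1, Bx, By, 4 * By / \<phi>}) f
           \<and> (\<forall>i<N. f (x i) = y i)
           \<and> (\<forall>t\<in>{-Bx..Bx}. \<bar>f t\<bar> \<le> 8 * real (N - 1) * Bx * By / \<phi> + By)"
proof -
  have "card {..<N} = Suc (N - 1)" using assms(1) by simp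
  moreover have "\<bar>y i\<bar> \<le> By" if "i \<in> {..<N}" for i
    using assms(5)[of i] that by (simp add: abs_le_iff)
  ultimately obtain c a p where c: "\<bar>c\<bar> \<le> By"
    and ap: "\<forall>k<N - 1. \<bar>a k\<bar> \<le> 4 * By / \<phi> \<and> p k \<in> x ` {..<N}"
    and interp: "\<forall>i\<in>{..<N}. relu_expansion (N - 1) c a p (x i) = y i"
    using relu_expansion_interpolates[of "{..<N}" "N - 1" \<phi> y By x] assms(2,6) by auto
  have knots: "\<bar>p k\<bar> \<le> Bx" if "k < N - 1" for k
    using ap assms(5) that by fastforce
  let ?M = "Max {1, Bx, By, 4 * By / \<phi>}"
  have "is_relu_fnn 2 (N - 1) ?M (relu_expansion (N - 1) c a p)"
    using c ap knots by (intro is_relu_fnn_relu_expansion) force+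
  moreover have "\<bar>relu_expansion (N - 1) c a p t\<bar> \<le> 8 * real (N - 1) * Bx * By / \<phi> + By"
    if "t \<in> {-Bx..Bx}" for t
    using abs_relu_expansion_le[OF c, of "N - 1" a "4 * By / \<phi>" p Bx t] ap knots that
    by (simp add: abs_le_iff algebra_simps)
  ultimately show ?thesis using interp by blast
qed

end
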